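(* Let $\mathcal{H},\mathcal{K}$ be complex Hilbert spaces, let $\Phi:\mathcal{B}(\mathcal{H})\to\mathcal{B}(\mathcal{K})$ be a unital positive linear map, and let $A,B\in\mathcal{B}(\mathcal{H})$ with $A$ positive invertible and $mA\le B\le MA$ for some scalars $0<m<M$. Then $$\Phi(BA^{-1}B)\le\left(\frac{M+m}{2\sqrt{Mm}}\right)^2\Phi(B)\Phi(A)^{-1}\Phi(B).$$
   Context: $\le$ is the Löwner order. A linear map is positive if it maps positive operators to positive operators, and unital if it maps $I$ to $I$. *)

theory Defs
  imports "HOL-Analysis.Analysis" "HOL-Library.Complex_Order"
begin

class complex_vector = real_vector +
  fixes scaleC :: "complex \<Rightarrow> 'a \<Rightarrow> 'a"
  assumes scaleC_add_right: "scaleC a (x + y) = scaleC a x + scaleC a y"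
    and scaleC_add_left: "scaleC (a + b) x = scaleC a x + scaleC b x"
    and scaleC_scaleC: "scaleC a (scaleC b x) = scaleC (a * b) x"
    and scaleC_one: "scaleC 1 x = x"
    and scaleR_scaleC: "scaleR r x = scaleC (complex_of_real r) x"

text \<open>Complex inner product spaces (inner product linear in the second argument),
  whose norm is the one induced by the inner product.\<close>
class complex_inner = complex_vector + real_normed_vector +
  fixes cinner :: "'a \<Rightarrow> 'a \<Rightarrow> complex"
  assumes cinner_cnj_commute: "cinner x y = cnj (cinner y x)"
    and cinner_add_right: "cinner x (y + z) = cinner x y + cinner x z"
    and cinner_scaleC_right: "cinner x (scaleC c y) = c * cinner x y"
    and cinner_ge_zero: "0 \<le> cinner x x"
    and cinner_eq_zero_iff: "cinner x x = 0 \<longleftrightarrow> x = 0"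
    and norm_eq_sqrt_cinner: "norm x = sqrt (Re (cinner x x))"

class chilbert_space = complex_inner + complete_space

definition bop :: "('a::chilbert_space \<Rightarrow> 'a) \<Rightarrow> bool" where
  "bop T \<longleftrightarrow> bounded_linear T \<and> (\<forall>c x. T (scaleC c x) = scaleC c (T x))"

definition positive_op :: "('a::chilbert_space \<Rightarrow> 'a) \<Rightarrow> bool" where
  "positive_op T \<longleftrightarrow> bop T \<and> (\<forall>x. 0 \<le> cinner x (T x))"

definition loewner_le :: "('a::chilbert_space \<Rightarrow> 'a) \<Rightarrow> ('a \<Rightarrow> 'a) \<Rightarrow> bool" where
  "loewner_le S T \<longleftrightarrow> positive_op (\<lambda>x. T x - S x)"

definition invertible_op :: "('a::chilbert_space \<Rightarrow> 'a) \<Rightarrow> bool" where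
  "invertible_op T \<longleftrightarrow> bop T \<and> (\<exists>S. bop S \<and> T \<circ> S = id \<and> S \<circ> T = id)"

definition unital_positive_linear_map ::
    "(('a::chilbert_space \<Rightarrow> 'a) \<Rightarrow> ('b::chilbert_space \<Rightarrow> 'b)) \<Rightarrow> bool" where
  "unital_positive_linear_map \<Phi> \<longleftrightarrow>
     (\<forall>T. bop T \<longrightarrow> bop (\<Phi> T)) \<and>
     (\<forall>S T. bop S \<longrightarrow> bop T \<longrightarrow> \<Phi> (\<lambda>x. S x + T x) = (\<lambda>y. \<Phi> S y + \<Phi> T y)) \<and>
     (\<forall>c T. bop T \<longrightarrow> \<Phi> (\<lambda>x. scaleC c (T x)) = (\<lambda>y. scaleC c (\<Phi> T y))) \<and>
     (\<forall>T. positive_op T \<longrightarrow> positive_op (\<Phi> T)) \<and>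
     \<Phi> id = id"

end

(* With Y = B - m A we have 0 <= Y <= (M - m) A, and Cauchy-Schwarz for the form of Y turns
   this into Y A^-1 Y <= (M - m) Y, which expands to B A^-1 B <= (M + m) B - M m A.  A positive
   map preserves this inequality, and the operator AM-GM inequality
   s Q - t P <= s^2 / (4 t) Q P^-1 Q, i.e. the positivity of Z P^-1 Z for Z = (s/2) Q - t P,
   applied with Q = Phi B, P = Phi A, s = M + m, t = M m, finishes the proof.  Phi A is
   invertible since A >= eps I gives Phi A >= eps I, and a positive operator that is bounded
   below is onto by the Banach fixed point theorem. *)

theory Submission
  imports Defs
begin

lemma scaleC_diff_right: "scaleC c ((x::'a::complex_vector) - y) = scaleC c x - scaleC c y"
  by (metis scaleC_add_right eq_diff_eq)

lemma cinner_add_left: "cinner (x + y) (z::'a::complex_inner) = cinner x z + cinner y z"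
  by (metis cinner_cnj_commute cinner_add_right complex_cnj_add)

lemma cinner_scaleC_left: "cinner (scaleC c x) (y::'a::complex_inner) = cnj c * cinner x y"
  by (metis cinner_cnj_commute cinner_scaleC_right complex_cnj_mult)

lemma cinner_diff_right: "cinner x (y - z) = cinner x y - cinner (x::'a::complex_inner) z"
  by (metis cinner_add_right eq_diff_eq)

lemma cinner_diff_left: "cinner (x - y) z = cinner x z - cinner y (z::'a::complex_inner)"
  by (metis cinner_add_left eq_diff_eq)

lemma cinner_zero_right [simp]: "cinner x (0::'a::complex_inner) = 0"
  using cinner_diff_right[of x 0 0] by simp

lemma cinner_scaleR_right: "cinner x (scaleR r y) = of_real r * cinner x (y::'a::complex_inner)"
  by (simp add: scaleR_scaleC cinner_scaleC_right)

lemma cinner_scaleR_left: "cinner (scaleR r x) y = of_real r * cinner x (y::'a::complex_inner)"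
  by (simp add: scaleR_scaleC cinner_scaleC_left)

lemma cinner_self_norm: "cinner x x = complex_of_real ((norm (x::'a::complex_inner))\<^sup>2)"
proof -
  have "0 \<le> Re (cinner x x)" "Im (cinner x x) = 0"
    using cinner_ge_zero[of x] by (simp_all add: less_eq_complex_def)
  then show ?thesis using norm_eq_sqrt_cinner[of x] by (simp add: complex_eq_iff)
qed

lemma norm_scaleC: "norm (scaleC c (x::'a::complex_inner)) = cmod c * norm x"
proof -
  have "complex_of_real ((norm (scaleC c x))\<^sup>2) = cnj c * c * complex_of_real ((norm x)\<^sup>2)"
    by (simp only: cinner_self_norm[symmetric] cinner_scaleC_left cinner_scaleC_right
        mult.assoc mult.left_commute)
  also have "\<dots> = complex_of_real ((cmod c)\<^sup>2) * complex_of_real ((norm x)\<^sup>2)"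
    by (simp only: complex_norm_square mult.commute[of "cnj c"])
  also have "\<dots> = complex_of_real ((cmod c * norm x)\<^sup>2)"
    by (simp add: power_mult_distrib)
  finally have "(norm (scaleC c x))\<^sup>2 = (cmod c * norm x)\<^sup>2" by (simp only: of_real_eq_iff)
  then show ?thesis by (simp add: power2_eq_iff_nonneg)
qed

lemma bop_apply_add: "bop T \<Longrightarrow> T (x + y) = T x + T y"
  unfolding bop_def using linear_add bounded_linear.linear by blast

lemma bop_apply_diff: "bop T \<Longrightarrow> T (x - y) = T x - T y"
  unfolding bop_def using linear_diff bounded_linear.linear by blast

lemma bop_apply_scaleR: "bop T \<Longrightarrow> T (scaleR r x) = scaleR r (T x)"
  unfolding bop_def using linear_scale bounded_linear.linear by blast

lemma bop_apply_scaleC: "bop T \<Longrightarrow> T (scaleC c x) = scaleC c (T x)"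
  unfolding bop_def by blast

lemma bop_ident: "bop (\<lambda>x::'a::chilbert_space. x)"
  unfolding bop_def by (simp add: bounded_linear_ident)

lemma bop_id: "bop (id::'a::chilbert_space \<Rightarrow> 'a)"
  using bop_ident by (simp add: id_def)

lemma bop_add: "bop S \<Longrightarrow> bop T \<Longrightarrow> bop (\<lambda>x. S x + T x)"
  unfolding bop_def by (auto intro: bounded_linear_add simp: scaleC_add_right)

lemma bop_diff: "bop S \<Longrightarrow> bop T \<Longrightarrow> bop (\<lambda>x. S x - T x)"
  unfolding bop_def by (auto intro: bounded_linear_sub simp: scaleC_diff_right)

lemma bop_scaleC:
  assumes "bop T"
  shows "bop (\<lambda>x. scaleC c (T x))"
proof -
  have "bounded_linear (\<lambda>x::'a. scaleC c x)"
    by (rule bounded_linear_intro[where K = "cmod c"])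
      (simp_all add: scaleC_add_right scaleR_scaleC scaleC_scaleC mult.commute norm_scaleC)
  then show ?thesis
    using assms unfolding bop_def
    by (auto intro: bounded_linear_compose simp: scaleC_scaleC mult.commute)
qed

lemma bop_scaleR: "bop T \<Longrightarrow> bop (\<lambda>x. scaleR r (T x))"
  using bop_scaleC[of T "complex_of_real r"] by (simp add: scaleR_scaleC)

lemma bop_comp: "bop S \<Longrightarrow> bop T \<Longrightarrow> bop (S \<circ> T)"
  unfolding bop_def by (auto simp: comp_def intro: bounded_linear_compose)

lemma bop_norm_bound: "bop T \<Longrightarrow> \<exists>K>0. \<forall>x. norm (T x) \<le> norm x * K"
  unfolding bop_def using bounded_linear.pos_bounded by blast

definition selfadjoint_op :: "('a::chilbert_space \<Rightarrow> 'a) \<Rightarrow> bool" where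
  "selfadjoint_op T \<longleftrightarrow> bop T \<and> (\<forall>x y. cinner x (T y) = cinner (T x) y)"

lemma selfadjoint_op_diff:
  "selfadjoint_op S \<Longrightarrow> selfadjoint_op T \<Longrightarrow> selfadjoint_op (\<lambda>x. S x - T x)"
  unfolding selfadjoint_op_def by (simp add: bop_diff cinner_diff_left cinner_diff_right)

lemma selfadjoint_op_scaleR: "selfadjoint_op T \<Longrightarrow> selfadjoint_op (\<lambda>x. scaleR r (T x))"
  unfolding selfadjoint_op_def by (simp add: bop_scaleR cinner_scaleR_left cinner_scaleR_right)

lemma positive_op_bop: "positive_op T \<Longrightarrow> bop T"
  by (simp add: positive_op_def)

lemma positive_op_iff:
  "positive_op T \<longleftrightarrow> bop T \<and> (\<forall>x. Im (cinner x (T x)) = 0 \<and> 0 \<le> Re (cinner x (T x)))"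
  unfolding positive_op_def less_eq_complex_def by auto

lemma positive_op_cinner_real:
  "positive_op T \<Longrightarrow> cinner x (T x) = complex_of_real (Re (cinner x (T x)))"
  unfolding positive_op_iff by (simp add: complex_eq_iff)

lemma positive_op_cinner_commute: "positive_op T \<Longrightarrow> cinner (T x) x = cinner x (T x)"
  by (metis cinner_cnj_commute positive_op_cinner_real complex_cnj_complex_of_real)

text \<open>Polarization: a form with real diagonal is Hermitian; test it at x + y and x + i y.\<close>
lemma positive_op_selfadjoint:
  assumes P: "positive_op T"
  shows "selfadjoint_op T"
  unfolding selfadjoint_op_def
proof (intro conjI allI positive_op_bop[OF P])
  fix x y
  have T: "bop T" using P by (rule positive_op_bop)
  define b where "b = cinner x (T y)"
  define c where "c = cinner y (T x)"
  have cb: "cinner (T y) x = cnj b" and cc: "cinner (T x) y = cnj c"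
    unfolding b_def c_def by (metis cinner_cnj_commute)+
  have diag: "cinner (T x) x = cinner x (T x)" "cinner (T y) y = cinner y (T y)"
    using positive_op_cinner_commute[OF P] by blast+
  have "cinner (T (x + y)) (x + y) = cinner (x + y) (T (x + y))"
    by (rule positive_op_cinner_commute[OF P])
  then have h1: "cnj b + cnj c = b + c"
    by (simp add: bop_apply_add[OF T] cinner_add_left cinner_add_right diag cb cc
        flip: b_def c_def)
  have "cinner (T (x + scaleC \<i> y)) (x + scaleC \<i> y) = cinner (x + scaleC \<i> y) (T (x + scaleC \<i> y))"
    by (rule positive_op_cinner_commute[OF P])
  then have h2: "\<i> * cnj c - \<i> * cnj b = \<i> * b - \<i> * c"
    by (simp add: bop_apply_add[OF T] bop_apply_scaleC[OF T] cinner_add_left cinner_add_right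
        cinner_scaleC_left cinner_scaleC_right diag cb cc algebra_simps flip: b_def c_def)
  from h1 h2 have "b = cnj c"
    by (auto simp: complex_eq_iff)
  then show "cinner x (T y) = cinner (T x) y" by (simp add: cc b_def)
qed

lemma le_mult_if_quadratic_nonneg:
  fixes a b s :: real
  assumes "0 \<le> a" "0 \<le> b" "0 \<le> s" and quad: "\<And>t. 0 \<le> a - 2 * t * s + t\<^sup>2 * s * b"
  shows "s \<le> a * b"
proof (cases "b = 0")
  case True
  show ?thesis
  proof (rule ccontr)
    assume "\<not> s \<le> a * b"
    then have "s > 0" using True by simp
    have "0 \<le> a - 2 * ((a + 1) / (2 * s)) * s + ((a + 1) / (2 * s))\<^sup>2 * s * b" by (rule quad)
    then show False using True \<open>s > 0\<close> by (simp add: field_simps)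
  qed
next
  case False
  then have "b > 0" using assms(2) by simp
  have "0 \<le> a - 2 * (1 / b) * s + (1 / b)\<^sup>2 * s * b" by (rule quad)
  then have "0 \<le> a - s / b" using \<open>b > 0\<close> by (simp add: field_simps power2_eq_square)
  then show ?thesis using \<open>b > 0\<close> by (simp add: field_simps)
qed

lemma positive_op_cauchy_schwarz:
  assumes P: "positive_op T"
  shows "(cmod (cinner x (T y)))\<^sup>2 \<le> Re (cinner x (T x)) * Re (cinner y (T y))"
proof -
  have T: "bop T" using P by (rule positive_op_bop)
  define s where "s = cinner x (T y)"
  have ys: "cinner y (T x) = cnj s"
    using positive_op_selfadjoint[OF P] unfolding s_def selfadjoint_op_def
    by (metis cinner_cnj_commute)
  have ss: "s * cnj s = complex_of_real ((cmod s)\<^sup>2)" by (simp only: complex_norm_square)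
  have "0 \<le> Re (cinner x (T x)) - 2 * t * (cmod s)\<^sup>2 + t\<^sup>2 * (cmod s)\<^sup>2 * Re (cinner y (T y))"
    for t
  proof -
    define w where "w = x - scaleC (complex_of_real t * cnj s) y"
    have "cinner w (T w) = cinner x (T x) - complex_of_real t * (s * cnj s) - complex_of_real t * (s * cnj s)
        + complex_of_real (t\<^sup>2) * (s * cnj s) * cinner y (T y)"
      unfolding w_def
      by (simp add: bop_apply_diff[OF T] bop_apply_scaleC[OF T] cinner_diff_left cinner_diff_right
          cinner_scaleC_left cinner_scaleC_right ys power2_eq_square algebra_simps flip: s_def)
    also have "\<dots> = complex_of_real (Re (cinner x (T x)) - 2 * t * (cmod s)\<^sup>2
        + t\<^sup>2 * (cmod s)\<^sup>2 * Re (cinner y (T y)))"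
      unfolding ss
      by (subst (1 2) positive_op_cinner_real[OF P]) simp
    finally show ?thesis using P unfolding positive_op_iff by (metis Re_complex_of_real)
  qed
  then show ?thesis
    using P le_mult_if_quadratic_nonneg unfolding positive_op_iff s_def by auto
qed

lemma positive_op_ident: "positive_op (\<lambda>x::'a::chilbert_space. x)"
  unfolding positive_op_def by (simp add: bop_ident cinner_ge_zero)

lemma cinner_cauchy_schwarz: "cmod (cinner (x::'a::chilbert_space) y) \<le> norm x * norm y"
proof -
  have "(cmod (cinner x y))\<^sup>2 \<le> (norm x * norm y)\<^sup>2"
    using positive_op_cauchy_schwarz[OF positive_op_ident, of x y]
    by (simp add: cinner_self_norm power_mult_distrib)
  then show ?thesis by (rule power2_le_imp_le) simp
qed

lemma Re_cinner_le_norm: "Re (cinner (x::'a::chilbert_space) y) \<le> norm x * norm y"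
  using cinner_cauchy_schwarz[of x y] complex_Re_le_cmod order_trans by blast

lemma positive_op_add: "positive_op S \<Longrightarrow> positive_op T \<Longrightarrow> positive_op (\<lambda>x. S x + T x)"
  unfolding positive_op_iff by (auto intro: bop_add simp: cinner_add_right)

lemma positive_op_scaleR: "positive_op T \<Longrightarrow> 0 \<le> r \<Longrightarrow> positive_op (\<lambda>x. scaleR r (T x))"
  unfolding positive_op_iff by (auto intro: bop_scaleR simp: cinner_scaleR_right)

lemma positive_op_comp_selfadjoint:
  assumes Z: "selfadjoint_op Z" and R: "positive_op R"
  shows "positive_op (Z \<circ> R \<circ> Z)"
  unfolding positive_op_def
proof (intro conjI allI)
  show "bop (Z \<circ> R \<circ> Z)"
    using Z R by (simp add: bop_comp positive_op_bop selfadjoint_op_def)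
  have "cinner x (Z (R (Z x))) = cinner (Z x) (R (Z x))" for x
    using Z by (simp add: selfadjoint_op_def)
  then show "0 \<le> cinner x ((Z \<circ> R \<circ> Z) x)" for x
    using R by (simp add: positive_op_def)
qed

lemma loewner_le_trans [trans]: "loewner_le S U \<Longrightarrow> loewner_le U T \<Longrightarrow> loewner_le S T"
  unfolding loewner_le_def
  by (drule (1) positive_op_add) (simp add: algebra_simps)

lemma loewner_le_positive: "loewner_le S T \<Longrightarrow> positive_op S \<Longrightarrow> positive_op T"
  unfolding loewner_le_def by (drule (1) positive_op_add) simp

lemma loewner_le_bop: "loewner_le S T \<Longrightarrow> bop S \<Longrightarrow> bop T"
  unfolding loewner_le_def by (drule positive_op_bop, drule (1) bop_add) simp

lemma loewner_le_scaled_ident_iff: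
  assumes "bop T"
  shows "loewner_le (\<lambda>x. scaleR \<epsilon> x) T \<longleftrightarrow>
    (\<forall>x. Im (cinner x (T x)) = 0 \<and> \<epsilon> * (norm x)\<^sup>2 \<le> Re (cinner x (T x)))"
  using assms
  by (simp add: loewner_le_def positive_op_iff bop_diff bop_scaleR bop_ident cinner_diff_right
      cinner_scaleR_right cinner_self_norm)

lemma invertible_op_inv:
  assumes "invertible_op A"
  shows "bop (inv A)" and "A (inv A x) = x" and "inv A (A x) = x"
proof -
  obtain S where S: "bop S" "A \<circ> S = id" "S \<circ> A = id"
    using assms unfolding invertible_op_def by blast
  then have "inv A = S" by (simp add: inv_unique_comp)
  with S show "bop (inv A)" "A (inv A x) = x" "inv A (A x) = x"
    by (simp_all add: pointfree_idE)
qed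

lemma positive_op_inv:
  assumes A: "positive_op A" "invertible_op A"
  shows "positive_op (inv A)"
  unfolding positive_op_def
proof (intro conjI allI invertible_op_inv(1)[OF A(2)])
  fix z
  have "cinner z (inv A z) = cinner (A (inv A z)) (inv A z)"
    by (simp add: invertible_op_inv(2)[OF A(2)])
  also have "\<dots> = cinner (inv A z) (A (inv A z))"
    by (rule positive_op_cinner_commute[OF A(1)])
  finally show "0 \<le> cinner z (inv A z)"
    using A(1) by (simp add: positive_op_def)
qed

text \<open>If \<open>inv A\<close> has norm at most \<open>K\<close>, then Cauchy-Schwarz for the form of \<open>A\<close>, evaluated at
  \<open>x\<close> and \<open>inv A x\<close>, gives \<open>A \<ge> 1/K\<close>.\<close>
lemma positive_invertible_bounded_below:
  assumes A: "positive_op A" "invertible_op A"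
  obtains \<epsilon> where "0 < \<epsilon>" and "loewner_le (\<lambda>x. scaleR \<epsilon> x) A"
proof -
  note S = invertible_op_inv[OF A(2)]
  obtain K where K: "K > 0" "\<And>x. norm (inv A x) \<le> norm x * K"
    using bop_norm_bound[OF S(1)] by blast
  have "(1 / K) * (norm x)\<^sup>2 \<le> Re (cinner x (A x))" for x
  proof (cases "x = 0")
    case True
    then show ?thesis using A(1) by (simp add: positive_op_iff)
  next
    case False
    have q0: "0 \<le> Re (cinner x (A x))" using A(1) by (simp add: positive_op_iff)
    have "((norm x)\<^sup>2)\<^sup>2 \<le> Re (cinner x (A x)) * Re (cinner (inv A x) x)"
      using positive_op_cauchy_schwarz[OF A(1), of x "inv A x"]
      by (simp add: S(2) cinner_self_norm del: of_real_power)
    also have "\<dots> \<le> Re (cinner x (A x)) * (norm x * K * norm x)"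
      using Re_cinner_le_norm[of "inv A x" x] K(2)[of x]
      by (intro mult_left_mono[OF _ q0]) (metis mult_right_mono norm_ge_zero order_trans)
    finally have "(norm x)\<^sup>2 * (norm x)\<^sup>2 \<le> (Re (cinner x (A x)) * K) * (norm x)\<^sup>2"
      by (simp add: power2_eq_square mult_ac)
    then have "(norm x)\<^sup>2 \<le> Re (cinner x (A x)) * K"
      by (rule mult_right_le_imp_le) (use False in simp)
    then show ?thesis using K(1) by (simp add: field_simps)
  qed
  then show ?thesis
    using that[of "1 / K"] K(1) A(1)
    by (simp add: loewner_le_scaled_ident_iff positive_op_bop positive_op_iff)
qed

lemma positive_op_norm_le:
  assumes T: "positive_op T" and "0 \<le> c"
    and up: "\<And>y. Re (cinner y (T y)) \<le> c * (norm y)\<^sup>2"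
  shows "norm (T y) \<le> c * norm y"
proof (cases "T y = 0")
  case True
  then show ?thesis using \<open>0 \<le> c\<close> by simp
next
  case False
  have "(norm (T y))\<^sup>2 = Re (cinner y (T (T y)))"
    using positive_op_selfadjoint[OF T] by (simp add: selfadjoint_op_def cinner_self_norm)
  also have "\<dots> \<le> cmod (cinner y (T (T y)))"
    by (rule complex_Re_le_cmod)
  finally have "((norm (T y))\<^sup>2)\<^sup>2 \<le> (cmod (cinner y (T (T y))))\<^sup>2"
    by (rule power_mono) simp
  also have "\<dots> \<le> Re (cinner y (T y)) * Re (cinner (T y) (T (T y)))"
    by (rule positive_op_cauchy_schwarz[OF T])
  also have "\<dots> \<le> (c * (norm y)\<^sup>2) * (c * (norm (T y))\<^sup>2)"
    using T up[of y] up[of "T y"] \<open>0 \<le> c\<close> by (intro mult_mono) (auto simp: positive_op_iff)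
  finally have "((norm (T y))\<^sup>2)\<^sup>2 \<le> (c * norm y * norm (T y))\<^sup>2"
    by (simp add: power_mult_distrib power2_eq_square mult_ac)
  then have "(norm (T y))\<^sup>2 \<le> c * norm y * norm (T y)"
    by (rule power2_le_imp_le) (use \<open>0 \<le> c\<close> in simp)
  then have "norm (T y) * norm (T y) \<le> (c * norm y) * norm (T y)"
    by (simp add: power2_eq_square)
  then show ?thesis
    by (rule mult_right_le_imp_le) (use False in simp)
qed

lemma bop_form_bound:
  assumes "bop P"
  obtains K where "0 < K" and "\<And>x. Re (cinner x (P x)) \<le> K * (norm x)\<^sup>2"
proof -
  obtain K where K: "K > 0" "\<And>x. norm (P x) \<le> norm x * K"
    using bop_norm_bound[OF assms] by blast
  have "Re (cinner x (P x)) \<le> K * (norm x)\<^sup>2" for x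
  proof -
    have "norm x * norm (P x) \<le> norm x * (norm x * K)"
      by (rule mult_left_mono[OF K(2)]) simp
    then show ?thesis
      using Re_cinner_le_norm[of x "P x"] by (simp add: power2_eq_square mult_ac)
  qed
  with K(1) show ?thesis by (rule that)
qed

lemma positive_op_bounded_below_contraction:
  assumes P: "positive_op P" and "0 < \<epsilon>"
    and lb: "\<And>x. \<epsilon> * (norm x)\<^sup>2 \<le> Re (cinner x (P x))"
  obtains t c where "0 < t" and "0 \<le> c" and "c < 1"
    and "\<And>y. norm (y - scaleR t (P y)) \<le> c * norm y"
proof -
  obtain K where "0 < K" and up: "\<And>x. Re (cinner x (P x)) \<le> K * (norm x)\<^sup>2"
    using bop_form_bound[OF positive_op_bop[OF P]] by blast
  define t where "t = 1 / (K + \<epsilon> + 1)"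
  have t: "0 < t" "t * K \<le> 1" "t * \<epsilon> < 1"
    using \<open>0 < K\<close> \<open>0 < \<epsilon>\<close> unfolding t_def by (auto simp: field_simps)
  define c where "c = 1 - t * \<epsilon>"
  have c: "0 \<le> c" "c < 1"
    using t \<open>0 < \<epsilon>\<close> unfolding c_def by auto
  define T where "T = (\<lambda>y. y - scaleR t (P y))"
  have Tq: "cinner y (T y) = complex_of_real ((norm y)\<^sup>2 - t * Re (cinner y (P y)))" for y
    unfolding T_def using positive_op_cinner_real[OF P, of y]
    by (simp add: cinner_diff_right cinner_scaleR_right cinner_self_norm)
  have "t * Re (cinner y (P y)) \<le> (norm y)\<^sup>2" for y
  proof -
    have "t * Re (cinner y (P y)) \<le> t * (K * (norm y)\<^sup>2)"
      using up t(1) by (simp add: mult_left_mono)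
    also have "\<dots> \<le> (norm y)\<^sup>2"
      using mult_right_mono[OF t(2), of "(norm y)\<^sup>2"] by (simp add: mult.assoc)
    finally show ?thesis .
  qed
  moreover have "bop T"
    unfolding T_def by (intro bop_diff bop_ident bop_scaleR positive_op_bop[OF P])
  ultimately have "positive_op T"
    by (simp add: positive_op_iff Tq)
  moreover have "Re (cinner y (T y)) \<le> c * (norm y)\<^sup>2" for y
    using mult_left_mono[OF lb[of y], of t] t(1) unfolding Tq c_def by (simp add: algebra_simps)
  ultimately have "norm (T y) \<le> c * norm y" for y
    by (rule positive_op_norm_le[OF _ c(1)])
  then show ?thesis
    using that t(1) c unfolding T_def by blast
qed

text \<open>A solution of \<open>P y = z\<close> is a fixed point of the contraction \<open>y \<mapsto> y - t (P y - z)\<close>.\<close>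
lemma positive_op_bounded_below_surj:
  assumes P: "positive_op P" and "0 < \<epsilon>"
    and lb: "\<And>x. \<epsilon> * (norm x)\<^sup>2 \<le> Re (cinner x (P x))"
  shows "surj P"
proof -
  obtain t c where "0 < t" and c: "0 \<le> c" "c < 1"
    and contr: "\<And>y. norm (y - scaleR t (P y)) \<le> c * norm y"
    using positive_op_bounded_below_contraction[OF assms] by blast
  have "\<exists>y. P y = z" for z
  proof -
    define f where "f = (\<lambda>y. y - scaleR t (P y - z))"
    have "dist (f x) (f y) \<le> c * dist x y" for x y
      using contr[of "x - y"] positive_op_bop[OF P]
      by (simp add: f_def dist_norm bop_apply_diff algebra_simps)
    then obtain y where "f y = y"
      using banach_fix_type[OF c] by blast
    then show ?thesis
      using \<open>0 < t\<close> by (auto simp: f_def)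
  qed
  then show "surj P" by (metis surj_def)
qed

lemma bop_inv_if_bounded_below:
  assumes A: "bop A" "bij A" and "0 < \<epsilon>"
    and lb: "\<And>x. \<epsilon> * (norm x)\<^sup>2 \<le> Re (cinner x (A x))"
  shows "bop (inv A)"
proof -
  define R where "R = inv A"
  have AR: "A (R z) = z" for z
    using A(2) unfolding R_def by (simp add: bij_is_surj surj_f_inv_f)
  have "inj A" using A(2) by (rule bij_is_inj)
  have R_scaleC: "R (scaleC c z) = scaleC c (R z)" for c z
    using \<open>inj A\<close> by (rule injD) (simp add: AR bop_apply_scaleC[OF A(1)])
  have "bounded_linear R"
  proof (rule bounded_linear_intro[where K = "1 / \<epsilon>"])
    show "R (x + y) = R x + R y" for x y
      using \<open>inj A\<close> by (rule injD) (simp add: AR bop_apply_add[OF A(1)])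
    show "R (scaleR r x) = scaleR r (R x)" for r x
      using R_scaleC by (simp add: scaleR_scaleC)
    show "norm (R z) \<le> norm z * (1 / \<epsilon>)" for z
    proof -
      have "\<epsilon> * (norm (R z))\<^sup>2 \<le> norm (R z) * norm z"
        using lb[of "R z"] Re_cinner_le_norm[of "R z" z] by (simp add: AR)
      then have "\<epsilon> * norm (R z) \<le> norm z" if "R z \<noteq> 0"
        using that by (simp add: power2_eq_square mult_ac)
      then show ?thesis
        using \<open>0 < \<epsilon>\<close> by (cases "R z = 0") (auto simp: field_simps)
    qed
  qed
  with R_scaleC show ?thesis
    by (simp add: bop_def R_def)
qed

lemma invertible_op_if_bounded_below:
  assumes "0 < \<epsilon>" and A: "loewner_le (\<lambda>x. scaleR \<epsilon> x) A"
  shows "invertible_op A"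
proof -
  have Ab: "bop A"
    using loewner_le_bop[OF A bop_scaleR[OF bop_ident]] .
  have Ap: "positive_op A"
    using loewner_le_positive[OF A positive_op_scaleR[OF positive_op_ident]] \<open>0 < \<epsilon>\<close> by simp
  have lb: "\<epsilon> * (norm x)\<^sup>2 \<le> Re (cinner x (A x))" for x
    using A by (simp add: loewner_le_scaled_ident_iff[OF Ab])
  have "inj A"
  proof (rule injI)
    fix x y
    assume "A x = A y"
    then have "\<epsilon> * (norm (x - y))\<^sup>2 \<le> 0"
      using lb[of "x - y"] by (simp add: bop_apply_diff[OF Ab])
    then show "x = y" using \<open>0 < \<epsilon>\<close> by (simp add: mult_le_0_iff)
  qed
  moreover have "surj A"
    using positive_op_bounded_below_surj[OF Ap \<open>0 < \<epsilon>\<close> lb] .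
  ultimately have "bij A" by (rule bijI)
  then have "A \<circ> inv A = id" "inv A \<circ> A = id"
    by (simp_all add: bij_is_surj bij_is_inj flip: surj_iff inj_iff)
  with Ab bop_inv_if_bounded_below[OF Ab \<open>bij A\<close> \<open>0 < \<epsilon>\<close> lb] show ?thesis
    unfolding invertible_op_def by blast
qed

lemma upl_positive: "unital_positive_linear_map \<Phi> \<Longrightarrow> positive_op T \<Longrightarrow> positive_op (\<Phi> T)"
  unfolding unital_positive_linear_map_def by blast

lemma upl_id: "unital_positive_linear_map \<Phi> \<Longrightarrow> \<Phi> id = id"
  unfolding unital_positive_linear_map_def by blast

lemma upl_add:
  "unital_positive_linear_map \<Phi> \<Longrightarrow> bop S \<Longrightarrow> bop T \<Longrightarrow>
    \<Phi> (\<lambda>x. S x + T x) = (\<lambda>y. \<Phi> S y + \<Phi> T y)"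
  unfolding unital_positive_linear_map_def by blast

lemma upl_scaleR:
  "unital_positive_linear_map \<Phi> \<Longrightarrow> bop T \<Longrightarrow> \<Phi> (\<lambda>x. scaleR r (T x)) = (\<lambda>y. scaleR r (\<Phi> T y))"
  unfolding unital_positive_linear_map_def scaleR_scaleC by blast

lemma upl_diff:
  assumes \<Phi>: "unital_positive_linear_map \<Phi>" and "bop S" "bop T"
  shows "\<Phi> (\<lambda>x. S x - T x) = (\<lambda>y. \<Phi> S y - \<Phi> T y)"
proof -
  have "\<Phi> S = \<Phi> (\<lambda>x. (S x - T x) + T x)"
    by simp
  also have "\<dots> = (\<lambda>y. \<Phi> (\<lambda>x. S x - T x) y + \<Phi> T y)"
    by (rule upl_add[OF \<Phi> bop_diff[OF assms(2,3)] assms(3)])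
  finally show ?thesis
    by (simp add: fun_eq_iff)
qed

lemma upl_mono:
  assumes \<Phi>: "unital_positive_linear_map \<Phi>" and "bop S" and "loewner_le S T"
  shows "loewner_le (\<Phi> S) (\<Phi> T)"
  using upl_positive[OF \<Phi>, of "\<lambda>x. T x - S x"] assms loewner_le_bop[OF assms(3,2)]
  unfolding loewner_le_def by (simp add: upl_diff)

lemma upl_scaled_ident:
  "unital_positive_linear_map \<Phi> \<Longrightarrow> \<Phi> (\<lambda>x. scaleR r x) = (\<lambda>y. scaleR r y)"
  using upl_scaleR[OF _ bop_id, of \<Phi> r] upl_id[of \<Phi>] by simp

lemma upl_invertible:
  assumes \<Phi>: "unital_positive_linear_map \<Phi>" and A: "positive_op A" "invertible_op A"
  shows "invertible_op (\<Phi> A)"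
proof -
  obtain \<epsilon> where "0 < \<epsilon>" and "loewner_le (\<lambda>x. scaleR \<epsilon> x) A"
    using positive_invertible_bounded_below[OF A] .
  then have "loewner_le (\<lambda>y. scaleR \<epsilon> y) (\<Phi> A)"
    using upl_mono[OF \<Phi> bop_scaleR[OF bop_ident]] upl_scaled_ident[OF \<Phi>] by metis
  then show ?thesis
    using invertible_op_if_bounded_below \<open>0 < \<epsilon>\<close> by blast
qed

text \<open>With \<open>\<tau> = \<langle>Y x, A\<inverse> Y x\<rangle>\<close>, Cauchy-Schwarz for the form of \<open>Y\<close> at \<open>x\<close> and \<open>A\<inverse> Y x\<close>,
  followed by \<open>Y \<le> c A\<close>, gives \<open>\<tau>\<^sup>2 \<le> c \<langle>x, Y x\<rangle> \<tau>\<close>.\<close>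
lemma sandwich_inv_form_le:
  assumes A: "positive_op A" "invertible_op A" and Y: "positive_op Y" and "0 \<le> c"
    and YA: "loewner_le Y (\<lambda>x. scaleR c (A x))"
  shows "Re (cinner (Y x) (inv A (Y x))) \<le> c * Re (cinner x (Y x))"
proof -
  define v where "v = inv A (Y x)"
  define \<alpha> where "\<alpha> = Re (cinner x (Y x))"
  define \<tau> where "\<tau> = Re (cinner (Y x) v)"
  have "0 \<le> \<alpha>" using Y by (simp add: positive_op_iff \<alpha>_def)
  have "0 \<le> \<tau>" using positive_op_inv[OF A] by (simp add: positive_op_iff \<tau>_def v_def)
  have "cinner x (Y v) = cinner (Y x) v"
    using positive_op_selfadjoint[OF Y] by (simp add: selfadjoint_op_def)
  also have "\<dots> = complex_of_real \<tau>"
    using positive_op_cinner_real[OF positive_op_inv[OF A], of "Y x"] by (simp add: \<tau>_def v_def)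
  finally have "\<tau>\<^sup>2 \<le> \<alpha> * Re (cinner v (Y v))"
    using positive_op_cauchy_schwarz[OF Y, of x v] by (simp add: \<alpha>_def)
  also have "\<dots> \<le> \<alpha> * (c * \<tau>)"
  proof (rule mult_left_mono[OF _ \<open>0 \<le> \<alpha>\<close>])
    have "Re (cinner v (Y v)) \<le> c * Re (cinner v (A v))"
      using YA by (auto simp: loewner_le_def positive_op_iff cinner_diff_right cinner_scaleR_right)
    also have "cinner v (A v) = cinner (Y x) v"
      using positive_op_cinner_commute[OF A(1), of v] by (simp add: v_def invertible_op_inv(2)[OF A(2)])
    finally show "Re (cinner v (Y v)) \<le> c * \<tau>" by (simp add: \<tau>_def)
  qed
  finally have "\<tau> * \<tau> \<le> (c * \<alpha>) * \<tau>"
    by (simp add: power2_eq_square mult_ac)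
  then have "\<tau> \<le> c * \<alpha>"
    using \<open>0 \<le> \<tau>\<close> \<open>0 \<le> \<alpha>\<close> \<open>0 \<le> c\<close> by (cases "\<tau> = 0") (auto intro: mult_right_le_imp_le)
  then show ?thesis by (simp add: \<tau>_def v_def \<alpha>_def)
qed

lemma sandwich_inv_le_scaled:
  assumes A: "positive_op A" "invertible_op A" and Y: "positive_op Y" and "0 \<le> c"
    and YA: "loewner_le Y (\<lambda>x. scaleR c (A x))"
  shows "loewner_le (Y \<circ> inv A \<circ> Y) (\<lambda>x. scaleR c (Y x))"
proof -
  have S: "positive_op (inv A)"
    using positive_op_inv[OF A] .
  have "cinner x (scaleR c (Y x) - Y (inv A (Y x))) =
      complex_of_real (c * Re (cinner x (Y x)) - Re (cinner (Y x) (inv A (Y x))))" for x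
    using positive_op_cinner_real[OF Y, of x] positive_op_cinner_real[OF S, of "Y x"]
      positive_op_selfadjoint[OF Y]
    by (simp add: cinner_diff_right cinner_scaleR_right selfadjoint_op_def)
  moreover have "bop (\<lambda>x. scaleR c (Y x) - (Y \<circ> inv A \<circ> Y) x)"
    using Y S by (intro bop_diff bop_scaleR bop_comp positive_op_bop)
  ultimately show ?thesis
    using sandwich_inv_form_le[OF assms] unfolding loewner_le_def positive_op_iff by simp
qed

lemma sandwich_inv_le_between:
  assumes A: "positive_op A" "invertible_op A" and "bop B" and "m \<le> M"
    and lower: "loewner_le (\<lambda>x. scaleR m (A x)) B"
    and upper: "loewner_le B (\<lambda>x. scaleR M (A x))"
  shows "loewner_le (B \<circ> inv A \<circ> B) (\<lambda>x. scaleR (M + m) (B x) - scaleR (M * m) (A x))"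
proof -
  define Y where "Y = (\<lambda>x. B x - scaleR m (A x))"
  have Y: "positive_op Y"
    using lower unfolding loewner_le_def Y_def .
  have "loewner_le Y (\<lambda>x. scaleR (M - m) (A x))"
    using upper unfolding loewner_le_def Y_def by (simp add: algebra_simps)
  then have "loewner_le (Y \<circ> inv A \<circ> Y) (\<lambda>x. scaleR (M - m) (Y x))"
    using sandwich_inv_le_scaled[OF A Y] \<open>m \<le> M\<close> by simp
  moreover have
    "scaleR (M - m) (Y x) - (Y \<circ> inv A \<circ> Y) x =
      (scaleR (M + m) (B x) - scaleR (M * m) (A x)) - (B \<circ> inv A \<circ> B) x" for x
    using A(1) \<open>bop B\<close> invertible_op_inv[OF A(2)]
    by (simp add: Y_def positive_op_bop bop_apply_diff bop_apply_scaleR algebra_simps)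
  ultimately show ?thesis
    unfolding loewner_le_def by simp
qed

text \<open>The difference of the two sides is \<open>Z P\<inverse> Z / t\<close> with \<open>Z = (s/2) Q - t P\<close>.\<close>
lemma operator_am_gm:
  assumes Q: "selfadjoint_op Q" and P: "positive_op P" "invertible_op P" and "0 < t"
  shows "loewner_le (\<lambda>y. scaleR s (Q y) - scaleR t (P y))
    (\<lambda>y. scaleR (s\<^sup>2 / (4 * t)) ((Q \<circ> inv P \<circ> Q) y))"
proof -
  define R where "R = inv P"
  define Z where "Z = (\<lambda>y. scaleR (s / 2) (Q y) - scaleR t (P y))"
  have "selfadjoint_op Z"
    unfolding Z_def using Q positive_op_selfadjoint[OF P(1)]
    by (intro selfadjoint_op_diff selfadjoint_op_scaleR)
  then have "positive_op (\<lambda>y. scaleR (1 / t) ((Z \<circ> R \<circ> Z) y))"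
    unfolding R_def using positive_op_inv[OF P] \<open>0 < t\<close>
    by (intro positive_op_scaleR positive_op_comp_selfadjoint) simp_all
  moreover have "Z (R (Z y)) = scaleR (s\<^sup>2 / 4) (Q (R (Q y))) - scaleR (s * t) (Q y) + scaleR (t\<^sup>2) (P y)"
    for y
    using Q P(1) invertible_op_inv[OF P(2)]
    by (simp add: Z_def R_def selfadjoint_op_def positive_op_bop bop_apply_diff bop_apply_scaleR
        power2_eq_square algebra_simps)
      (simp flip: scaleR_add_left)
  ultimately show ?thesis
    unfolding loewner_le_def R_def using \<open>0 < t\<close>
    by (simp add: algebra_simps power2_eq_square)
qed

theorem mainTheorem3:
  fixes \<Phi> :: "('h::chilbert_space \<Rightarrow> 'h) \<Rightarrow> ('k::chilbert_space \<Rightarrow> 'k)"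
    and A B :: "'h \<Rightarrow> 'h"
    and m M :: real
  assumes "unital_positive_linear_map \<Phi>"
    and "bop A" and "bop B"
    and "positive_op A" and "invertible_op A"
    and "0 < m" and "m < M"
    and "loewner_le (\<lambda>x. scaleR m (A x)) B"
    and "loewner_le B (\<lambda>x. scaleR M (A x))"
  shows "loewner_le (\<Phi> (B \<circ> inv A \<circ> B))
           (\<lambda>y. scaleR (((M + m) / (2 * sqrt (M * m)))\<^sup>2) ((\<Phi> B \<circ> inv (\<Phi> A) \<circ> \<Phi> B) y))"
proof -
  note \<Phi> = assms(1)
  have "positive_op B"
    using loewner_le_positive[OF assms(8) positive_op_scaleR[OF assms(4)]] assms(6) by simp
  have "loewner_le (\<Phi> (B \<circ> inv A \<circ> B)) (\<Phi> (\<lambda>x. scaleR (M + m) (B x) - scaleR (M * m) (A x)))"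
    using sandwich_inv_le_between[OF assms(4,5,3) _ assms(8,9)] assms(3,5,7)
    by (intro upl_mono[OF \<Phi>] bop_comp invertible_op_inv(1)) auto
  also have "\<Phi> (\<lambda>x. scaleR (M + m) (B x) - scaleR (M * m) (A x)) =
      (\<lambda>y. scaleR (M + m) (\<Phi> B y) - scaleR (M * m) (\<Phi> A y))"
    using assms(2,3) by (simp add: upl_diff[OF \<Phi>] upl_scaleR[OF \<Phi>] bop_scaleR)
  also have "loewner_le \<dots> (\<lambda>y. scaleR ((M + m)\<^sup>2 / (4 * (M * m))) ((\<Phi> B \<circ> inv (\<Phi> A) \<circ> \<Phi> B) y))"
    using assms(4-7) \<open>positive_op B\<close>
    by (intro operator_am_gm positive_op_selfadjoint upl_positive[OF \<Phi>] upl_invertible[OF \<Phi>])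
      simp_all
  also have "(M + m)\<^sup>2 / (4 * (M * m)) = ((M + m) / (2 * sqrt (M * m)))\<^sup>2"
    using assms(6,7) by (simp add: power_divide power_mult_distrib)
  finally show ?thesis .
qed

end
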